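(* Let $2\leq d\leq k$ be integers, $\Sigma_k=\{\sigma_1,\ldots,\sigma_k\}$, $\Sigma_d=\{\sigma_1,\ldots,\sigma_d\}$. Consider $r\geq 2$ users over $\Sigma_k$, where user 1 has confusion graph $G_1=(\Sigma_k,\{ab\mid a\in\Sigma_k,\ b\in\Sigma_k\setminus\Sigma_d,\ a\neq b\})$ and users $2,\ldots,r$ have arbitrary confusion graphs $G_2,\ldots,G_r$ on $\Sigma_k$. If $(\alpha\log_2 d,R_2,\ldots,R_r)$ with $\alpha\in[0,1]$ is a feasible rate vector, then $\sum_{i=2}^r R_i\leq(1-\alpha)\log_2 k$.
   Context: Setting: a sender broadcasts a word of length $n$ over a finite alphabet $\Sigma$ to $r$ users; user $i$ has a confusion graph $G_i$ on vertex set $\Sigma$, where $ab$ is an edge iff user $i$ cannot distinguish letters $a$ and $b$. Two words $x,y\in\Sigma^n$ are distinguishable by user $i$ if there is a coordinate $t$ with $x_t\neq y_t$ and $x_ty_t$ not an edge of $G_i$. A vector $(m_1,\ldots,m_r)$ of positive integers is feasible for length $n$ if there is a map $E:[m_1]\times\cdots\times[m_r]\to\Sigma^n$ such that for every $i$ and all tuples $a,a'$ with $a_i\neq a'_i$, $E(a)$ and $E(a')$ are distinguishable by user $i$. A rate vector $(R_1,\ldots,R_r)$ is feasible if there is a sequence of feasible vectors for lengths $n\to\infty$ with $R_i=\lim_{n\to\infty}\frac{\log_2 m_i^{(n)}}{n}$ for all $i$. *)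

theory Defs
  imports "HOL-Analysis.Analysis"
begin

definition is_graph_on :: "'a set \<Rightarrow> 'a set set \<Rightarrow> bool" where
  "is_graph_on Alph G \<longleftrightarrow> (\<forall>e\<in>G. e \<subseteq> Alph \<and> card e = 2)"

definition words :: "'a set \<Rightarrow> nat \<Rightarrow> 'a list set" where
  "words Alph n = {x. set x \<subseteq> Alph \<and> length x = n}"

definition distinguishable :: "'a set set \<Rightarrow> 'a list \<Rightarrow> 'a list \<Rightarrow> bool" where
  "distinguishable G x y \<longleftrightarrow>
     (\<exists>t < min (length x) (length y). x ! t \<noteq> y ! t \<and> {x ! t, y ! t} \<notin> G)"

text \<open>Feasible vector \<open>(m 1, ..., m r)\<close> for length n; users indexed by \<open>{1..r}\<close>,
  message sets \<open>[m i]\<close> represented as \<open>{..<m i}\<close>.\<close>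
definition feasible_vector ::
  "'a set \<Rightarrow> nat \<Rightarrow> (nat \<Rightarrow> 'a set set) \<Rightarrow> nat \<Rightarrow> (nat \<Rightarrow> nat) \<Rightarrow> bool" where
  "feasible_vector Alph r Gs n m \<longleftrightarrow>
     (\<forall>i\<in>{1..r}. m i \<ge> 1) \<and>
     (\<exists>E :: (nat \<Rightarrow> nat) \<Rightarrow> 'a list.
        (\<forall>a \<in> PiE {1..r} (\<lambda>i. {..<m i}). E a \<in> words Alph n) \<and>
        (\<forall>i\<in>{1..r}. \<forall>a \<in> PiE {1..r} (\<lambda>i. {..<m i}). \<forall>a' \<in> PiE {1..r} (\<lambda>i. {..<m i}).
            a i \<noteq> a' i \<longrightarrow> distinguishable (Gs i) (E a) (E a')))"

definition feasible_rate ::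
  "'a set \<Rightarrow> nat \<Rightarrow> (nat \<Rightarrow> 'a set set) \<Rightarrow> (nat \<Rightarrow> real) \<Rightarrow> bool" where
  "feasible_rate Alph r Gs R \<longleftrightarrow>
     (\<exists>(N :: nat \<Rightarrow> nat) (M :: nat \<Rightarrow> nat \<Rightarrow> nat).
        filterlim N at_top sequentially \<and>
        (\<forall>j. feasible_vector Alph r Gs (N j) (M j)) \<and>
        (\<forall>i\<in>{1..r}. (\<lambda>j. log 2 (real (M j i)) / real (N j)) \<longlonglongrightarrow> R i))"

end

theory Submission
  imports Defs
begin

(*
  User 1 only sees a word x through its cylinder: the words over the first d letters that
  user 1 cannot tell apart from x. Codewords carrying different messages for user 1 have
  disjoint cylinders inside the d^n words over the first d letters, so for some message a1
  the union U of the cylinders of the codewords with first component a1 has at most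
  d^n / m1 elements. These codewords are pairwise distinct, since users 2, ..., r must tell
  them apart, and all their cylinders lie in U. Induction on the length, using convexity of
  t \<mapsto> t^g with d^g = k, shows that at most |U|^g words have their cylinder inside U.
  Hence m2 \<cdots> mr \<le> (d^n / m1)^g; taking logarithms, dividing by n and passing to the
  limit gives R2 + ... + Rr \<le> log k - g \<alpha> log d = (1 - \<alpha>) log k.
*)

lemma convex_on_powr_nonneg:
  fixes p :: real
  assumes "p \<ge> 1"
  shows "convex_on {0..} (\<lambda>x. x powr p)"
proof (rule convex_on_linorderI)
  fix t x y :: real
  assume t: "0 < t" "t < 1" and xy: "x \<in> {0..}" "y \<in> {0..}" "x < y"
  show "((1 - t) *\<^sub>R x + t *\<^sub>R y) powr p \<le> (1 - t) * x powr p + t * y powr p"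
  proof (cases "x = 0")
    case True
    have "t powr p \<le> t powr 1"
      using t assms by (intro powr_mono') auto
    then have "(t * y) powr p \<le> t * y powr p"
      using t xy by (simp add: powr_mult mult_right_mono)
    then show ?thesis using True by simp
  next
    case False
    then show ?thesis
      using convex_onD[OF powr_convex[OF assms], of t x y] t xy by simp
  qed
qed simp

lemma convex_on_sum_le_extremes:
  fixes f :: "real \<Rightarrow> real" and u :: "'a \<Rightarrow> real"
  assumes f: "convex_on {a..b} f" and "finite S"
    and u: "\<And>c. c \<in> S \<Longrightarrow> u c \<in> {a..b}"
    and total: "(\<Sum>c\<in>S. u c - a) = b - a"
  shows "(\<Sum>c\<in>S. f (u c)) \<le> f b + (real (card S) - 1) * f a"
proof (cases "a = b")
  case True
  then have "u c = a" if "c \<in> S" for c using u[OF that] by simp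
  then show ?thesis using True by (simp add: algebra_simps)
next
  case False
  define t where "t c = (u c - a) / (b - a)" for c
  have "0 \<le> b - a"
    unfolding total[symmetric] using u by (intro sum_nonneg) auto
  then have "b - a > 0" using False by simp
  have "f (u c) \<le> (1 - t c) * f a + t c * f b" if "c \<in> S" for c
  proof -
    have "t c * (b - a) = u c - a"
      using \<open>b - a > 0\<close> by (simp add: t_def)
    then have "u c = (1 - t c) *\<^sub>R a + t c *\<^sub>R b"
      by (simp add: algebra_simps)
    moreover have "0 \<le> t c" "t c \<le> 1"
      using u[OF that] \<open>b - a > 0\<close> by (auto simp: t_def)
    ultimately show ?thesis
      using convex_onD[OF f, of "t c" a b] \<open>b - a > 0\<close> by simp
  qed
  then have "(\<Sum>c\<in>S. f (u c)) \<le> (\<Sum>c\<in>S. (1 - t c) * f a + t c * f b)"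
    by (rule sum_mono)
  also have "\<dots> = (real (card S) - (\<Sum>c\<in>S. t c)) * f a + (\<Sum>c\<in>S. t c) * f b"
    by (simp add: sum.distrib sum_distrib_right sum_subtractf left_diff_distrib)
  also have "(\<Sum>c\<in>S. t c) = 1"
    using total \<open>b - a > 0\<close> by (simp add: t_def sum_divide_distrib[symmetric])
  finally show ?thesis by simp
qed

lemma powr_spread_le:
  fixes d k g \<mu> V :: real
  assumes "0 < d" "1 \<le> k" "g \<ge> 1" "d powr g = k" "0 \<le> \<mu>" "0 \<le> V"
  shows "(\<mu> + V) powr g + (k - 1) * \<mu> powr g \<le> (d * \<mu> + V) powr g"
proof (cases "d * \<mu> + V = 0")
  case True
  then show ?thesis using assms by (simp add: add_nonneg_eq_0_iff)
next
  case False
  define S where "S = d * \<mu> + V"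
  define s where "s = d * \<mu> / S"
  have "0 \<le> d * \<mu>" using assms by simp
  then have "S > 0" using False assms unfolding S_def by linarith
  have s: "0 \<le> s" "s \<le> 1" using \<open>S > 0\<close> assms by (auto simp: s_def S_def)
  note f = convex_onD[OF convex_on_powr_nonneg[OF \<open>g \<ge> 1\<close>]]
  have "s * S = d * \<mu>" using \<open>S > 0\<close> by (simp add: s_def)
  then have "\<mu> + V = (1 - s) *\<^sub>R S + s *\<^sub>R (S / d)"
    using assms by (simp add: S_def algebra_simps)
  then have A: "(\<mu> + V) powr g \<le> (1 - s) * S powr g + s * (S / d) powr g"
    using f[of s S "S / d"] s \<open>S > 0\<close> assms by simp
  have "\<mu> = (1 - s) *\<^sub>R 0 + s *\<^sub>R (S / d)"
    using \<open>S > 0\<close> assms by (simp add: s_def field_simps)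
  then have B: "\<mu> powr g \<le> s * (S / d) powr g"
    using f[of s 0 "S / d"] s \<open>S > 0\<close> assms by simp
  have "k * (S / d) powr g = S powr g"
    using \<open>S > 0\<close> assms by (simp add: powr_divide)
  then show ?thesis
    using A mult_left_mono[OF B, of "k - 1"] assms unfolding S_def[symmetric]
    by (simp add: algebra_simps)
qed

(* The inductive step of the count: d slices of sizes u c, and k - d further letters each
   contributing at most the size \<mu> of the intersection of the slices. *)
lemma sum_powr_add_min_powr_le:
  fixes u :: "nat \<Rightarrow> real" and d k :: nat and g \<mu> :: real
  assumes "1 \<le> d" "d \<le> k" "g \<ge> 1" "real d powr g = real k"
    and "0 \<le> \<mu>" and u: "\<And>c. c < d \<Longrightarrow> \<mu> \<le> u c"
  shows "(\<Sum>c<d. u c powr g) + (real k - real d) * \<mu> powr g \<le> (\<Sum>c<d. u c) powr g"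
proof -
  define V where "V = (\<Sum>c<d. u c - \<mu>)"
  have "0 \<le> V" unfolding V_def using u by (intro sum_nonneg) auto
  have mem: "u c \<in> {\<mu>..\<mu> + V}" if "c \<in> {..<d}" for c
    using member_le_sum[of c "{..<d}" "\<lambda>c. u c - \<mu>"] u that
    by (auto simp: V_def)
  have total: "(\<Sum>c<d. u c - \<mu>) = (\<mu> + V) - \<mu>" by (simp add: V_def)
  have cvx: "convex_on {\<mu>..\<mu> + V} (\<lambda>x. x powr g)"
    using \<open>0 \<le> \<mu>\<close>
    by (intro convex_on_subset[OF convex_on_powr_nonneg[OF \<open>g \<ge> 1\<close>]]) auto
  have "(\<Sum>c<d. u c powr g) \<le> (\<mu> + V) powr g + (real d - 1) * \<mu> powr g"
    using convex_on_sum_le_extremes[OF cvx _ mem total] by simp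
  also have "\<dots> = (\<mu> + V) powr g + (real k - 1) * \<mu> powr g - (real k - real d) * \<mu> powr g"
    by (simp add: algebra_simps)
  also have "\<dots> \<le> (real d * \<mu> + V) powr g - (real k - real d) * \<mu> powr g"
    using powr_spread_le[of "real d" "real k" g \<mu> V] assms \<open>0 \<le> V\<close> by simp
  also have "real d * \<mu> + V = (\<Sum>c<d. u c)"
    by (simp add: V_def sum_subtractf)
  finally show ?thesis by simp
qed

lemma finite_words: "finite A \<Longrightarrow> finite (words A n)"
  unfolding words_def by (rule finite_lists_length_eq)

lemma card_words: "finite A \<Longrightarrow> card (words A n) = card A ^ n"
  by (simp add: words_def card_lists_length_eq)

lemma nth_mem_words: "x \<in> words A n \<Longrightarrow> t < n \<Longrightarrow> x ! t \<in> A"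
  by (auto simp: words_def)

lemma distinguishable_imp_neq: "distinguishable G x y \<Longrightarrow> x \<noteq> y"
  by (auto simp: distinguishable_def)

lemma feasible_vectorE:
  assumes "feasible_vector Alph r Gs n m"
  obtains E where "\<And>i. i \<in> {1..r} \<Longrightarrow> 0 < m i"
    and "\<And>a. a \<in> PiE {1..r} (\<lambda>i. {..<m i}) \<Longrightarrow> E a \<in> words Alph n"
    and "\<And>i a a'. i \<in> {1..r} \<Longrightarrow> a \<in> PiE {1..r} (\<lambda>i. {..<m i}) \<Longrightarrow>
           a' \<in> PiE {1..r} (\<lambda>i. {..<m i}) \<Longrightarrow> a i \<noteq> a' i \<Longrightarrow> distinguishable (Gs i) (E a) (E a')"
proof -
  have pos: "\<forall>i\<in>{1..r}. 0 < m i"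
    using assms by (auto simp: feasible_vector_def Suc_le_eq)
  obtain E where words: "\<forall>a\<in>PiE {1..r} (\<lambda>i. {..<m i}). E a \<in> words Alph n"
    and dist: "\<forall>i\<in>{1..r}. \<forall>a\<in>PiE {1..r} (\<lambda>i. {..<m i}). \<forall>a'\<in>PiE {1..r} (\<lambda>i. {..<m i}).
           a i \<noteq> a' i \<longrightarrow> distinguishable (Gs i) (E a) (E a')"
    using assms unfolding feasible_vector_def by blast
  show thesis
    by (rule that[of E]) (use pos words dist in auto)
qed

lemma inj_on_PiE_if_separating:
  assumes "\<And>b b' i. b \<in> PiE I M \<Longrightarrow> b' \<in> PiE I M \<Longrightarrow> i \<in> I \<Longrightarrow> b i \<noteq> b' i \<Longrightarrow> f b \<noteq> f b'"
  shows "inj_on f (PiE I M)"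
proof (rule inj_onI)
  fix b b' assume b: "b \<in> PiE I M" and b': "b' \<in> PiE I M" and "f b = f b'"
  show "b = b'"
  proof (rule PiE_ext[OF b b'])
    fix i assume "i \<in> I"
    then show "b i = b' i" using assms[OF b b'] \<open>f b = f b'\<close> by blast
  qed
qed

lemma obtain_small_member_of_disjoint_family:
  assumes "finite W" "0 < m"
    and "\<And>a. a < m \<Longrightarrow> U a \<subseteq> W"
    and "\<And>a b. a < m \<Longrightarrow> b < m \<Longrightarrow> a \<noteq> b \<Longrightarrow> U a \<inter> U b = {}"
  obtains a where "a < m" "m * card (U a) \<le> card W"
proof -
  have "\<exists>a<m. m * card (U a) \<le> card W"
  proof (rule ccontr)
    assume none: "\<not> (\<exists>a<m. m * card (U a) \<le> card W)"
    have "m * card W = (\<Sum>a<m. card W)" by simp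
    also have "\<dots> < (\<Sum>a<m. m * card (U a))"
      using \<open>0 < m\<close> none by (intro sum_strict_mono) (auto simp: not_le)
    also have "\<dots> = m * card (\<Union>a<m. U a)"
      using assms(1,3,4) by (subst card_UN_disjoint) (auto simp: sum_distrib_left intro: finite_subset)
    also have "\<dots> \<le> m * card W"
      using assms(1,3) by (intro mult_left_mono card_mono) auto
    finally show False by simp
  qed
  then show thesis using that by blast
qed

(* The words over the first d letters that user 1, who confuses every letter \<ge> d with all
   other letters, cannot tell apart from x. *)
definition cylinder :: "nat \<Rightarrow> nat list \<Rightarrow> nat list set" where
  "cylinder d x = {w. length w = length x \<and> (\<forall>t<length x. w ! t < d \<and> (x ! t < d \<longrightarrow> w ! t = x ! t))}"

definition covered_words :: "nat \<Rightarrow> nat \<Rightarrow> nat \<Rightarrow> nat list set \<Rightarrow> nat list set" where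
  "covered_words k d n U = {x \<in> words {..<k} n. cylinder d x \<subseteq> U}"

lemma cylinder_Nil [simp]: "cylinder d [] = {[]}"
  by (auto simp: cylinder_def)

lemma Cons_in_cylinder_Cons:
  assumes "w < d" "c < d \<Longrightarrow> w = c" "ws \<in> cylinder d x"
  shows "w # ws \<in> cylinder d (c # x)"
  using assms by (auto simp: cylinder_def All_less_Suc2)

lemma nth_cylinder: "w \<in> cylinder d x \<Longrightarrow> t < length x \<Longrightarrow> x ! t < d \<Longrightarrow> w ! t = x ! t"
  by (simp add: cylinder_def)

lemma cylinder_subset_words: "cylinder d x \<subseteq> words {..<d} (length x)"
  by (auto simp: cylinder_def words_def in_set_conv_nth)

lemma finite_covered_words: "finite (covered_words k d n U)"
  unfolding covered_words_def by (rule finite_subset[OF _ finite_words]) auto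

lemma card_covered_words_0_le:
  assumes "finite U"
  shows "card (covered_words k d 0 U) \<le> card U"
proof -
  have "covered_words k d 0 U \<subseteq> U"
    by (auto simp: covered_words_def words_def)
  then show ?thesis using \<open>finite U\<close> by (rule card_mono[rotated])
qed

(* A first letter c \<ge> d constrains nothing, so the cylinder of the tail must lie in the
   slice Cons c' -` U for every c' < d. *)
lemma covered_words_Suc_subset:
  assumes "d \<le> k"
  shows "covered_words k d (Suc n) U \<subseteq>
    (\<Union>c<d. Cons c ` covered_words k d n (Cons c -` U)) \<union>
    (\<Union>c\<in>{d..<k}. Cons c ` covered_words k d n (\<Inter>c'<d. Cons c' -` U))"
proof
  fix x assume "x \<in> covered_words k d (Suc n) U"
  then obtain c y where x: "x = c # y" "c < k" "y \<in> words {..<k} n"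
    and cyl: "cylinder d (c # y) \<subseteq> U"
    by (cases x) (auto simp: covered_words_def words_def)
  show "x \<in> (\<Union>c<d. Cons c ` covered_words k d n (Cons c -` U)) \<union>
    (\<Union>c\<in>{d..<k}. Cons c ` covered_words k d n (\<Inter>c'<d. Cons c' -` U))"
  proof (cases "c < d")
    case True
    then have "cylinder d y \<subseteq> Cons c -` U"
      using cyl Cons_in_cylinder_Cons[of c d c] by auto
    then show ?thesis using True x by (auto simp: covered_words_def)
  next
    case False
    then have "cylinder d y \<subseteq> (\<Inter>c'<d. Cons c' -` U)"
      using cyl Cons_in_cylinder_Cons[of _ d c _ y] by auto
    then show ?thesis using False x by (auto simp: covered_words_def)
  qed
qed

lemma card_covered_words_Suc_le:
  assumes "d \<le> k"
  shows "card (covered_words k d (Suc n) U) \<le>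
    (\<Sum>c<d. card (covered_words k d n (Cons c -` U))) +
    (k - d) * card (covered_words k d n (\<Inter>c<d. Cons c -` U))"
proof -
  let ?C = "\<lambda>c. covered_words k d n (Cons c -` U)" and ?I = "covered_words k d n (\<Inter>c<d. Cons c -` U)"
  have "card (covered_words k d (Suc n) U) \<le>
      card ((\<Union>c<d. Cons c ` ?C c) \<union> (\<Union>c\<in>{d..<k}. Cons c ` ?I))"
    using covered_words_Suc_subset[OF assms] by (intro card_mono) (auto intro: finite_covered_words)
  also have "\<dots> \<le> (\<Sum>c<d. card (Cons c ` ?C c)) + (\<Sum>c\<in>{d..<k}. card (Cons c ` ?I))"
    by (intro card_Un_le[THEN order_trans] add_mono card_UN_le) auto
  also have "\<dots> = (\<Sum>c<d. card (?C c)) + (k - d) * card ?I"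
    by (simp add: card_image)
  finally show ?thesis .
qed

lemma sum_card_Cons_vimage_le:
  assumes "finite C" "finite U"
  shows "(\<Sum>c\<in>C. card (Cons c -` U)) \<le> card U"
proof -
  have "(\<Sum>c\<in>C. card (Cons c -` U)) = (\<Sum>c\<in>C. card (Cons c ` (Cons c -` U)))"
    by (rule sum.cong[OF refl], rule card_image[symmetric]) simp
  also have "\<dots> = card (\<Union>c\<in>C. Cons c ` (Cons c -` U))"
    using assms by (intro card_UN_disjoint[symmetric]) (auto simp: finite_vimageI)
  also have "\<dots> \<le> card U"
    using assms(2) by (intro card_mono) auto
  finally show ?thesis .
qed

lemma card_covered_words_le:
  assumes "1 \<le> d" "d \<le> k" "g \<ge> 1" "real d powr g = real k" "finite U"
  shows "real (card (covered_words k d n U)) \<le> real (card U) powr g"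
  using \<open>finite U\<close>
proof (induction n arbitrary: U)
  case 0
  have "real (card U) \<le> real (card U) powr g"
    using powr_mono[of 1 g "real (card U)"] \<open>g \<ge> 1\<close> by (cases "card U = 0") auto
  then show ?case using card_covered_words_0_le[OF "0.prems", of k d] by linarith
next
  case (Suc n)
  define I where "I = (\<Inter>c<d. Cons c -` U)"
  have fin: "finite (Cons c -` U)" for c using Suc.prems by (rule finite_vimageI) simp
  have "finite I" unfolding I_def using \<open>1 \<le> d\<close> fin by (intro finite_INT) (auto intro: exI[of _ 0])
  have "real (card (covered_words k d (Suc n) U)) \<le>
      (\<Sum>c<d. real (card (covered_words k d n (Cons c -` U)))) +
      (real k - real d) * real (card (covered_words k d n I))"
    using of_nat_mono[OF card_covered_words_Suc_le[OF \<open>d \<le> k\<close>, of n U], where 'a=real]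
      \<open>d \<le> k\<close>
    unfolding I_def by (simp add: of_nat_diff)
  also have "\<dots> \<le> (\<Sum>c<d. real (card (Cons c -` U)) powr g) + (real k - real d) * real (card I) powr g"
    using Suc.IH[OF fin] Suc.IH[OF \<open>finite I\<close>] \<open>d \<le> k\<close>
    by (intro add_mono sum_mono mult_left_mono) auto
  also have "\<dots> \<le> (\<Sum>c<d. real (card (Cons c -` U))) powr g"
    using assms(1-4) by (rule sum_powr_add_min_powr_le) (auto simp: I_def fin intro: card_mono)
  also have "\<dots> \<le> real (card U) powr g"
    using sum_card_Cons_vimage_le[of "{..<d}" U] Suc.prems \<open>g \<ge> 1\<close>
    by (intro powr_mono2) (auto simp flip: of_nat_sum)
  finally show ?case .
qed

lemma cylinders_disjoint_if_distinguishable: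
  assumes G: "G = {{a, b} | a b. a \<in> {..<k} \<and> b \<in> {..<k} - {..<d} \<and> a \<noteq> b}"
    and x: "x \<in> words {..<k} n" and y: "y \<in> words {..<k} n" and "distinguishable G x y"
  shows "cylinder d x \<inter> cylinder d y = {}"
proof -
  obtain t where t: "t < n" "x ! t \<noteq> y ! t" "{x ! t, y ! t} \<notin> G"
    using x y \<open>distinguishable G x y\<close> by (auto simp: distinguishable_def words_def)
  have edge: "{a, b} \<in> G" if "a < k" "b < k" "d \<le> b" "a \<noteq> b" for a b
    using that unfolding G by auto
  have "x ! t < k" "y ! t < k"
    using nth_mem_words[OF x t(1)] nth_mem_words[OF y t(1)] by auto
  then have "x ! t < d" "y ! t < d"
    using t(2,3) edge[of "x ! t" "y ! t"] edge[of "y ! t" "x ! t"]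
    by (auto simp: insert_commute not_le[symmetric])
  moreover have "length x = n" "length y = n" using x y by (auto simp: words_def)
  ultimately have "w ! t = x ! t" "w ! t = y ! t"
    if "w \<in> cylinder d x" "w \<in> cylinder d y" for w
    using that t(1) nth_cylinder by metis+
  then show ?thesis using t(2) by (metis disjoint_iff)
qed

lemma prod_le_card_covered_words:
  fixes E :: "(nat \<Rightarrow> nat) \<Rightarrow> nat list" and m :: "nat \<Rightarrow> nat" and r :: nat
  defines "A \<equiv> PiE {1..r} (\<lambda>i. {..<m i})"
  assumes "1 \<le> r" "a1 < m 1"
    and Ew: "\<And>a. a \<in> A \<Longrightarrow> E a \<in> words {..<k} n"
    and Ed: "\<And>i a a'. i \<in> {2..r} \<Longrightarrow> a \<in> A \<Longrightarrow> a' \<in> A \<Longrightarrow> a i \<noteq> a' i \<Longrightarrow> E a \<noteq> E a'"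
  shows "(\<Prod>i\<in>{2..r}. m i) \<le> card (covered_words k d n (\<Union>a\<in>{a \<in> A. a 1 = a1}. cylinder d (E a)))"
proof -
  define B where "B = PiE {2..r} (\<lambda>i. {..<m i})"
  define f where "f b = E (b(1 := a1))" for b
  have upd: "b(1 := a1) \<in> A" if "b \<in> B" for b
    using that assms(2,3) by (auto simp: A_def B_def PiE_iff extensional_def)
  have "inj_on f B"
    unfolding B_def
  proof (rule inj_on_PiE_if_separating)
    fix b b' i assume "b \<in> PiE {2..r} (\<lambda>i. {..<m i})" "b' \<in> PiE {2..r} (\<lambda>i. {..<m i})"
      and i: "i \<in> {2..r}" "b i \<noteq> b' i"
    then have "b(1 := a1) \<in> A" "b'(1 := a1) \<in> A" using upd unfolding B_def by auto
    then show "f b \<noteq> f b'"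
      using Ed[of i "b(1 := a1)" "b'(1 := a1)"] i unfolding f_def by auto
  qed
  moreover have "f ` B \<subseteq> covered_words k d n (\<Union>a\<in>{a \<in> A. a 1 = a1}. cylinder d (E a))"
    using Ew upd unfolding f_def covered_words_def by fastforce
  ultimately have "card B \<le> card (covered_words k d n (\<Union>a\<in>{a \<in> A. a 1 = a1}. cylinder d (E a)))"
    by (intro card_inj_on_le finite_covered_words)
  then show ?thesis
    by (simp add: B_def card_PiE)
qed

lemma prod_le_powr_of_feasible_vector:
  fixes Gs :: "nat \<Rightarrow> nat set set" and m :: "nat \<Rightarrow> nat" and g :: real
  assumes "1 \<le> d" "d \<le> k" "1 \<le> r"
    and G1: "Gs 1 = {{a, b} | a b. a \<in> {..<k} \<and> b \<in> {..<k} - {..<d} \<and> a \<noteq> b}"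
    and fv: "feasible_vector {..<k} r Gs n m"
    and "g \<ge> 1" "real d powr g = real k"
  shows "real (\<Prod>i\<in>{2..r}. m i) \<le> (real d ^ n / real (m 1)) powr g"
proof -
  define A where "A = PiE {1..r} (\<lambda>i. {..<m i})"
  obtain E where m_pos: "\<And>i. i \<in> {1..r} \<Longrightarrow> 0 < m i"
    and Ew: "\<And>a. a \<in> A \<Longrightarrow> E a \<in> words {..<k} n"
    and Ed: "\<And>i a a'. i \<in> {1..r} \<Longrightarrow> a \<in> A \<Longrightarrow> a' \<in> A \<Longrightarrow> a i \<noteq> a' i \<Longrightarrow>
               distinguishable (Gs i) (E a) (E a')"
    using feasible_vectorE[OF fv] unfolding A_def by blast
  have "0 < m 1" using m_pos \<open>1 \<le> r\<close> by simp
  define U where "U a1 = (\<Union>a\<in>{a \<in> A. a 1 = a1}. cylinder d (E a))" for a1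
  have U_words: "U a1 \<subseteq> words {..<d} n" for a1
    using Ew cylinder_subset_words unfolding U_def words_def by fastforce
  have U_disjoint: "U a1 \<inter> U a1' = {}" if "a1 \<noteq> a1'" for a1 a1'
    using cylinders_disjoint_if_distinguishable[OF G1 Ew Ew Ed] that \<open>1 \<le> r\<close>
    unfolding U_def by fastforce
  obtain a1 where "a1 < m 1" and small: "m 1 * card (U a1) \<le> card (words {..<d} n)"
    by (rule obtain_small_member_of_disjoint_family[OF finite_words \<open>0 < m 1\<close> U_words U_disjoint])
      simp_all
  have "(\<Prod>i\<in>{2..r}. m i) \<le> card (covered_words k d n (U a1))"
    unfolding U_def A_def
  proof (rule prod_le_card_covered_words[of r a1 m E k n d])
    fix i a a' assume "i \<in> {2..r}" "a \<in> PiE {1..r} (\<lambda>i. {..<m i})" "a' \<in> PiE {1..r} (\<lambda>i. {..<m i})"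
      "a i \<noteq> a' i"
    then have "distinguishable (Gs i) (E a) (E a')"
      using Ed[of i a a'] unfolding A_def by auto
    then show "E a \<noteq> E a'" by (rule distinguishable_imp_neq)
  qed (use \<open>1 \<le> r\<close> \<open>a1 < m 1\<close> Ew in \<open>auto simp: A_def\<close>)
  then have "real (\<Prod>i\<in>{2..r}. m i) \<le> real (card (covered_words k d n (U a1)))"
    by (rule of_nat_mono)
  also have "\<dots> \<le> real (card (U a1)) powr g"
    using assms(1,2,6,7) finite_subset[OF U_words finite_words]
    by (intro card_covered_words_le) auto
  also have "\<dots> \<le> (real d ^ n / real (m 1)) powr g"
    using small \<open>0 < m 1\<close> \<open>g \<ge> 1\<close> card_words[of "{..<d}" n]
    by (intro powr_mono2) (auto simp: field_simps simp flip: of_nat_mult of_nat_power)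
  finally show ?thesis .
qed

lemma log_prod:
  fixes f :: "'a \<Rightarrow> real"
  assumes "finite I" "\<And>i. i \<in> I \<Longrightarrow> f i \<noteq> 0"
  shows "log b (\<Prod>i\<in>I. f i) = (\<Sum>i\<in>I. log b (f i))"
proof -
  have "ln (\<Prod>i\<in>I. f i) = (\<Sum>i\<in>I. ln (f i))"
    using assms by (rule ln_prod)
  then show ?thesis unfolding log_def by (simp add: sum_divide_distrib)
qed

lemma log_base_mult_log: "1 < d \<Longrightarrow> 0 < k \<Longrightarrow> log d k * log b d = log b k"
  by (simp add: log_def)

lemma rate_sum_le_of_feasible_vector:
  fixes Gs :: "nat \<Rightarrow> nat set set" and m :: "nat \<Rightarrow> nat"
  assumes "2 \<le> d" "d \<le> k" "1 \<le> r"
    and G1: "Gs 1 = {{a, b} | a b. a \<in> {..<k} \<and> b \<in> {..<k} - {..<d} \<and> a \<noteq> b}"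
    and fv: "feasible_vector {..<k} r Gs n m" and "0 < n"
  shows "(\<Sum>i=2..r. log 2 (m i) / n) \<le> log 2 k - log d k * (log 2 (m 1) / n)"
proof -
  define g where "g = log d k"
  have "real d powr g = real k" "g \<ge> 1"
    using assms(1,2) by (auto simp: g_def)
  have m_pos: "0 < m i" if "i \<in> {1..r}" for i
    by (rule feasible_vectorE[OF fv]) (use that in auto)
  have "(\<Sum>i=2..r. log 2 (m i)) = log 2 (\<Prod>i=2..r. real (m i))"
    using m_pos by (subst log_prod) auto
  also have "\<dots> \<le> log 2 ((real d ^ n / real (m 1)) powr g)"
    using prod_le_powr_of_feasible_vector[OF _ assms(2,3) G1 fv \<open>g \<ge> 1\<close> \<open>real d powr g = real k\<close>]
      m_pos assms(1,3) by (subst log_le_cancel_iff) (auto intro: prod_pos)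
  also have "\<dots> = n * log 2 k - g * log 2 (m 1)"
    using m_pos[of 1] assms(1-3) log_base_mult_log[of d k 2]
    by (simp add: log_powr log_divide log_nat_power g_def algebra_simps)
  finally show ?thesis
    using \<open>0 < n\<close> by (simp add: sum_divide_distrib[symmetric] g_def field_simps)
qed

theorem corollary13:
  fixes d k r :: nat and Gs :: "nat \<Rightarrow> nat set set" and R :: "nat \<Rightarrow> real" and \<alpha> :: real
  assumes "2 \<le> d" and "d \<le> k" and "2 \<le> r"
    and "Gs 1 = {{a, b} | a b. a \<in> {..<k} \<and> b \<in> {..<k} - {..<d} \<and> a \<noteq> b}"
    and "\<forall>i\<in>{2..r}. is_graph_on {..<k} (Gs i)"
    and "\<alpha> \<in> {0..1}"
    and "R 1 = \<alpha> * log 2 (real d)"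
    and "feasible_rate {..<k} r Gs R"
  shows "(\<Sum>i=2..r. R i) \<le> (1 - \<alpha>) * log 2 (real k)"
proof -
  obtain N :: "nat \<Rightarrow> nat" and M :: "nat \<Rightarrow> nat \<Rightarrow> nat" where
    N_lim: "filterlim N at_top sequentially"
    and fv: "\<And>j. feasible_vector {..<k} r Gs (N j) (M j)"
    and rates: "\<And>i. i \<in> {1..r} \<Longrightarrow> (\<lambda>j. log 2 (M j i) / N j) \<longlonglongrightarrow> R i"
    using assms(8) unfolding feasible_rate_def by blast
  have "eventually (\<lambda>j. 1 \<le> N j) sequentially"
    using N_lim unfolding filterlim_at_top by blast
  then have "eventually (\<lambda>j. (\<Sum>i=2..r. log 2 (M j i) / N j)
      \<le> log 2 k - log d k * (log 2 (M j 1) / N j)) sequentially"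
    using rate_sum_le_of_feasible_vector[OF assms(1,2) _ assms(4) fv] assms(3)
    by (auto elim: eventually_mono)
  moreover have "(\<lambda>j. log 2 k - log d k * (log 2 (M j 1) / N j)) \<longlonglongrightarrow> log 2 k - log d k * R 1"
    using assms(3) by (intro tendsto_intros rates) auto
  moreover have "(\<lambda>j. \<Sum>i=2..r. log 2 (M j i) / N j) \<longlonglongrightarrow> (\<Sum>i=2..r. R i)"
    by (intro tendsto_sum rates) auto
  ultimately have "(\<Sum>i=2..r. R i) \<le> log 2 k - log d k * R 1"
    by (intro tendsto_le[OF trivial_limit_sequentially])
  also have "\<dots> = (1 - \<alpha>) * log 2 (real k)"
    using assms(1,2,7) log_base_mult_log[of d k 2] by (simp add: algebra_simps)
  finally show ?thesis .
qed

end
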